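(* Let $p>2$, $\beta=1/(p-1)$, and let $u$ be an ancient solution of the half-space problem $u_t-\Delta u=|\nabla u|^p$ in $Q:=\mathbb{R}^n_+\times(-\infty,0)$, $u=0$ on $\partial\mathbb{R}^n_+\times(-\infty,0)$. Then there is $C=C(n,p)>0$ such that $$u(x,t)\ge -C\,x_n^{1-\beta}\quad\text{for all }(x,t)\in Q.$$
   Context: $\mathbb{R}^n_+:=\{x\in\mathbb{R}^n: x_n>0\}$. An ancient solution of the half-space problem is a function $u\in C^{2,1}(Q)\cap C(\overline Q)$ satisfying the PDE pointwise in $Q$ and $u=0$ pointwise on $\partial\mathbb{R}^n_+\times(-\infty,0)$. *)

theory Defs
  imports "HOL-Analysis.Analysis"
begin

text \<open>Points of R^n are vectors of type real^'n; the coordinate k plays the role of x_n.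
  The open half-space R^n_+ = {x. x_n > 0}; Q = R^n_+ \<times> (-\<infinity>,0).\<close>

definition half_space :: "'n::finite \<Rightarrow> (real^'n) set" where
  "half_space k = {x. x $ k > 0}"

definition QQ :: "'n::finite \<Rightarrow> ((real^'n) \<times> real) set" where
  "QQ k = half_space k \<times> {..<0}"

definition ancient_solution :: "real \<Rightarrow> 'n::finite \<Rightarrow> (real^'n \<Rightarrow> real \<Rightarrow> real) \<Rightarrow> bool" where
  "ancient_solution p k u \<longleftrightarrow>
     continuous_on (closure (QQ k)) (\<lambda>(x,t). u x t) \<and>
     (\<exists>(Du :: real^'n \<Rightarrow> real \<Rightarrow> real^'n) (D2u :: real^'n \<Rightarrow> real \<Rightarrow> real^'n^'n)
        (ut :: real^'n \<Rightarrow> real \<Rightarrow> real).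
        (\<forall>(x,t)\<in>QQ k.
            ((\<lambda>y. u y t) has_derivative (\<lambda>h. Du x t \<bullet> h)) (at x) \<and>
            ((\<lambda>y. Du y t) has_derivative (\<lambda>h. D2u x t *v h)) (at x) \<and>
            ((\<lambda>s. u x s) has_real_derivative ut x t) (at t) \<and>
            ut x t - (\<Sum>i\<in>UNIV. D2u x t $ i $ i) = norm (Du x t) powr p) \<and>
        continuous_on (QQ k) (\<lambda>(x,t). Du x t) \<and>
        continuous_on (QQ k) (\<lambda>(x,t). D2u x t) \<and>
        continuous_on (QQ k) (\<lambda>(x,t). ut x t)) \<and>
     (\<forall>x t. x $ k = 0 \<longrightarrow> t < 0 \<longrightarrow> u x t = 0)"

end

theory Submission
  imports Defs
begin

text \<open>
  Fix a point \<open>(x, t)\<close> of \<open>Q\<close> and let \<open>d = x\<^sub>k\<close> and \<open>\<alpha> = 1 - \<beta>\<close>, so that \<open>(\<alpha> - 1) p = \<alpha> - 2\<close>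
  expresses the scaling invariance of the equation. On the half box of height \<open>2 d\<close> around \<open>x\<close>
  and a time interval \<open>(\<theta>, t]\<close>, \<open>u\<close> is compared with the barrier
  \<open>W(y, s) = - (c + K / (s - \<theta>)) y\<^sub>k + \<Sum>\<^sub>i r\<^sub>i\<^sup>\<alpha> \<Psi>((y\<^sub>i - z\<^sub>i) / r\<^sub>i)\<close>, where
  \<open>\<Psi>(\<sigma>) = - \<sigma>\<^sup>2 / (1 - \<sigma>\<^sup>2)\<close>. It tends to \<open>-\<infinity>\<close> on the lateral faces and at time \<open>\<theta>\<close>, it is
  nonpositive near \<open>y\<^sub>k = 0\<close>, where \<open>u\<close> is close to \<open>0\<close>, and for \<open>c \<sim> d\<^sup>-\<^sup>\<beta>\<close> and a suitable \<open>K\<close> it is a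
  strict subsolution, \<open>W\<^sub>s - \<Delta>W < |\<nabla>W|\<^sup>p\<close>, because near the faces the gradient term absorbs the
  curvature of \<open>\<Psi>\<close>. Hence \<open>u - W\<close> has no minimum in the parabolic interior, so \<open>u \<ge> W - \<epsilon>\<close>.
  At the centre, as \<open>\<theta> \<rightarrow> -\<infinity>\<close> and \<open>\<epsilon> \<rightarrow> 0\<close>, this reads \<open>u(x, t) \<ge> - c d - (2 d)\<^sup>\<alpha> / 3 = - C d\<^sup>\<alpha>\<close>.
\<close>

section \<open>The profile of the barrier\<close>

definition Psi :: "real \<Rightarrow> real" where "Psi s = - s\<^sup>2 / (1 - s\<^sup>2)"
definition Psi' :: "real \<Rightarrow> real" where "Psi' s = - 2 * s / (1 - s\<^sup>2)\<^sup>2"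
definition Psi'' :: "real \<Rightarrow> real" where "Psi'' s = - (2 + 6 * s\<^sup>2) / (1 - s\<^sup>2)^3"

lemma one_minus_square_pos: "\<bar>s\<bar> < 1 \<Longrightarrow> 0 < 1 - (s::real)\<^sup>2"
  by (simp add: abs_square_less_1)

lemma Psi_has_real_derivative: "\<bar>s\<bar> < 1 \<Longrightarrow> (Psi has_real_derivative Psi' s) (at s)"
  unfolding Psi_def [abs_def] Psi'_def using one_minus_square_pos [of s]
  by (auto intro!: derivative_eq_intros simp: divide_simps) algebra

lemma Psi'_has_real_derivative: "\<bar>s\<bar> < 1 \<Longrightarrow> (Psi' has_real_derivative Psi'' s) (at s)"
  unfolding Psi'_def [abs_def] Psi''_def using one_minus_square_pos [of s]
  by (auto intro!: derivative_eq_intros simp: divide_simps) algebra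

lemma Psi_nonpos: "\<bar>s\<bar> < 1 \<Longrightarrow> Psi s \<le> 0"
  using one_minus_square_pos [of s] by (simp add: Psi_def)

lemma Psi'_nonpos: "0 \<le> s \<Longrightarrow> Psi' s \<le> 0"
  by (simp add: Psi'_def)

lemma Psi_le_near_edge:
  assumes "\<bar>s\<bar> < 1"
  shows "Psi s \<le> 1 - 1 / (2 * (1 - \<bar>s\<bar>))"
proof -
  have pos: "0 < 1 - s\<^sup>2" using one_minus_square_pos [OF assms] .
  have "1 - s\<^sup>2 = (1 - \<bar>s\<bar>) * (1 + \<bar>s\<bar>)" by (simp add: algebra_simps power2_eq_square)
  also have "\<dots> \<le> (1 - \<bar>s\<bar>) * 2" using assms by (intro mult_left_mono) auto
  finally have "1 / (2 * (1 - \<bar>s\<bar>)) \<le> 1 / (1 - s\<^sup>2)" using pos by (intro divide_left_mono) auto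
  moreover have "Psi s = 1 - 1 / (1 - s\<^sup>2)" unfolding Psi_def using pos by (simp add: field_simps)
  ultimately show ?thesis by simp
qed

text \<open>Near \<open>\<sigma> = \<plusminus>1\<close>, \<open>-\<Psi>''\<close> grows like \<open>(1 - \<sigma>\<^sup>2)\<^sup>-\<^sup>3\<close> but \<open>|\<Psi>'|\<^sup>p \<ge> |\<Psi>'|\<^sup>2\<close> like \<open>(1 - \<sigma>\<^sup>2)\<^sup>-\<^sup>4\<close>.\<close>

lemma Psi''_absorbed_by_gradient:
  fixes \<kappa> p s :: real
  assumes \<kappa>: "0 < \<kappa>" "\<kappa> \<le> 1" and p: "2 \<le> p" and s: "\<bar>s\<bar> < 1"
  shows "- Psi'' s - \<kappa> * \<bar>Psi' s\<bar> powr p \<le> 8 * (8 / \<kappa>)^3"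
proof -
  define q where "q = 1 / (1 - s\<^sup>2)"
  have pos: "0 < 1 - s\<^sup>2" using one_minus_square_pos [OF s] .
  have q1: "1 \<le> q" unfolding q_def using pos by (simp add: field_simps)
  have "- Psi'' s = (2 + 6 * s\<^sup>2) * q^3" unfolding Psi''_def q_def using pos by (simp add: field_simps)
  also have "\<dots> \<le> 8 * q^3" using pos q1 by (intro mult_right_mono) auto
  finally have curv: "- Psi'' s \<le> 8 * q^3" .
  have slope: "\<bar>Psi' s\<bar> = 2 * \<bar>s\<bar> * q\<^sup>2" unfolding Psi'_def q_def by (simp add: power_divide abs_mult)
  show ?thesis
  proof (cases "q \<le> 8 / \<kappa>")
    case True
    then have "8 * q^3 \<le> 8 * (8 / \<kappa>)^3" using q1 by (intro mult_left_mono power_mono) auto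
    moreover have "0 \<le> \<kappa> * \<bar>Psi' s\<bar> powr p" using \<kappa> by simp
    ultimately show ?thesis using curv by linarith
  next
    case False
    then have big: "8 < \<kappa> * q" using \<kappa> by (simp add: field_simps)
    have "s\<^sup>2 = 1 - 1 / q" unfolding q_def using pos by (simp add: field_simps)
    moreover have "1 / q < 1 / 8"
    proof -
      have "8 < q" using big mult_left_le_one_le [of q \<kappa>] \<kappa> q1 by linarith
      then show ?thesis by (simp add: field_simps)
    qed
    ultimately have "(1/2)\<^sup>2 \<le> \<bar>s\<bar>\<^sup>2" by (simp add: power2_eq_square)
    then have "1/2 \<le> \<bar>s\<bar>" by (rule power2_le_imp_le) simp
    then have steep: "q\<^sup>2 \<le> \<bar>Psi' s\<bar>" unfolding slope using q1 by (simp add: mult_le_cancel_right1)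
    have "1 \<le> q\<^sup>2" using q1 by simp
    then have "1 \<le> \<bar>Psi' s\<bar>" using steep by linarith
    have "q^4 = (q\<^sup>2)\<^sup>2" by simp
    also have "\<dots> \<le> \<bar>Psi' s\<bar>\<^sup>2" using steep by (intro power_mono) auto
    also have "\<dots> = \<bar>Psi' s\<bar> powr 2" using \<open>1 \<le> \<bar>Psi' s\<bar>\<close> by simp
    also have "\<dots> \<le> \<bar>Psi' s\<bar> powr p" using \<open>1 \<le> \<bar>Psi' s\<bar>\<close> p by (intro powr_mono)
    finally have "\<kappa> * q^4 \<le> \<kappa> * \<bar>Psi' s\<bar> powr p" using \<kappa> by simp
    moreover have "8 * q^3 \<le> \<kappa> * q^4" using big q1 by (simp add: power_numeral_reduce mult_right_mono)
    moreover have "0 \<le> 8 * (8 / \<kappa>)^3" using \<kappa> by simp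
    ultimately show ?thesis using curv by linarith
  qed
qed

definition psi :: "real \<Rightarrow> real \<Rightarrow> real \<Rightarrow> real \<Rightarrow> real" where
  "psi \<alpha> r z s = r powr \<alpha> * Psi ((s - z) / r)"
definition psi' :: "real \<Rightarrow> real \<Rightarrow> real \<Rightarrow> real \<Rightarrow> real" where
  "psi' \<alpha> r z s = r powr (\<alpha> - 1) * Psi' ((s - z) / r)"
definition psi'' :: "real \<Rightarrow> real \<Rightarrow> real \<Rightarrow> real \<Rightarrow> real" where
  "psi'' \<alpha> r z s = r powr (\<alpha> - 2) * Psi'' ((s - z) / r)"

lemma abs_divide_less_1: "0 < r \<Longrightarrow> \<bar>s - z\<bar> < r \<Longrightarrow> \<bar>(s - z) / r\<bar> < (1::real)"
  by simp

lemma psi_has_real_derivative: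
  assumes "0 < r" "\<bar>s - z\<bar> < r"
  shows "(psi \<alpha> r z has_real_derivative psi' \<alpha> r z s) (at s)"
proof -
  have "((\<lambda>s. (s - z) / r) has_real_derivative 1 / r) (at s)"
    using assms(1) by (auto intro!: derivative_eq_intros)
  from DERIV_chain2 [OF Psi_has_real_derivative [OF abs_divide_less_1 [OF assms]] this]
  have "((\<lambda>s. r powr \<alpha> * Psi ((s - z) / r)) has_real_derivative r powr \<alpha> * (Psi' ((s - z) / r) * (1 / r))) (at s)"
    by (rule DERIV_cmult)
  moreover have "r powr \<alpha> * (Psi' ((s - z) / r) * (1 / r)) = psi' \<alpha> r z s"
    unfolding psi'_def using assms(1) by (simp add: powr_diff)
  ultimately show ?thesis unfolding psi_def [abs_def] by simp
qed

lemma psi'_has_real_derivative: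
  assumes "0 < r" "\<bar>s - z\<bar> < r"
  shows "(psi' \<alpha> r z has_real_derivative psi'' \<alpha> r z s) (at s)"
proof -
  have "((\<lambda>s. (s - z) / r) has_real_derivative 1 / r) (at s)"
    using assms(1) by (auto intro!: derivative_eq_intros)
  from DERIV_chain2 [OF Psi'_has_real_derivative [OF abs_divide_less_1 [OF assms]] this]
  have "((\<lambda>s. r powr (\<alpha> - 1) * Psi' ((s - z) / r)) has_real_derivative
      r powr (\<alpha> - 1) * (Psi'' ((s - z) / r) * (1 / r))) (at s)"
    by (rule DERIV_cmult)
  moreover have "r powr (\<alpha> - 1) * (Psi'' ((s - z) / r) * (1 / r)) = psi'' \<alpha> r z s"
    unfolding psi''_def using assms(1) by (simp add: powr_diff power2_eq_square)
  ultimately show ?thesis unfolding psi'_def [abs_def] by simp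
qed

lemma psi_nonpos: "0 < r \<Longrightarrow> \<bar>s - z\<bar> < r \<Longrightarrow> psi \<alpha> r z s \<le> 0"
  unfolding psi_def using Psi_nonpos [OF abs_divide_less_1] by (simp add: mult_nonneg_nonpos)

lemma psi'_nonpos: "0 < r \<Longrightarrow> z \<le> s \<Longrightarrow> psi' \<alpha> r z s \<le> 0"
  unfolding psi'_def using Psi'_nonpos [of "(s - z) / r"] by (simp add: mult_nonneg_nonpos)

lemma psi_le_near_edge:
  assumes "0 < r" "\<bar>s - z\<bar> < r" "(1 - \<delta>) * r \<le> \<bar>s - z\<bar>" "0 < \<delta>"
  shows "psi \<alpha> r z s \<le> r powr \<alpha> * (1 - 1 / (2 * \<delta>))"
proof -
  let ?s = "(s - z) / r"
  have "1 - \<delta> \<le> \<bar>?s\<bar>" using assms(1,3) by (simp add: field_simps)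
  then have "1 / (2 * \<delta>) \<le> 1 / (2 * (1 - \<bar>?s\<bar>))"
    using abs_divide_less_1 [OF assms(1,2)] assms(4) by (intro divide_left_mono) auto
  then have "Psi ?s \<le> 1 - 1 / (2 * \<delta>)"
    using Psi_le_near_edge [OF abs_divide_less_1 [OF assms(1,2)]] by linarith
  then show ?thesis unfolding psi_def by (intro mult_left_mono) auto
qed

lemma psi''_absorbed_by_gradient:
  fixes \<kappa> p :: real
  assumes p: "2 \<le> p" "(\<alpha> - 1) * p = \<alpha> - 2" "\<alpha> \<le> 2" and \<kappa>: "0 < \<kappa>" "\<kappa> \<le> 1"
    and r: "0 < d" "d \<le> r" and s: "\<bar>s - z\<bar> < r"
  shows "- psi'' \<alpha> r z s - \<kappa> * \<bar>psi' \<alpha> r z s\<bar> powr p \<le> d powr (\<alpha> - 2) * (8 * (8 / \<kappa>)^3)"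
proof -
  let ?s = "(s - z) / r"
  have "\<bar>psi' \<alpha> r z s\<bar> powr p = r powr ((\<alpha> - 1) * p) * \<bar>Psi' ?s\<bar> powr p"
    unfolding psi'_def by (simp add: abs_mult powr_mult powr_powr)
  then have "- psi'' \<alpha> r z s - \<kappa> * \<bar>psi' \<alpha> r z s\<bar> powr p
      = r powr (\<alpha> - 2) * (- Psi'' ?s - \<kappa> * \<bar>Psi' ?s\<bar> powr p)"
    unfolding psi''_def p(2) by (simp add: algebra_simps)
  also have "\<dots> \<le> r powr (\<alpha> - 2) * (8 * (8 / \<kappa>)^3)"
    using Psi''_absorbed_by_gradient [OF \<kappa> p(1) abs_divide_less_1 [OF _ s]] r by (intro mult_left_mono) auto
  also have "\<dots> \<le> d powr (\<alpha> - 2) * (8 * (8 / \<kappa>)^3)"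
    using r p(3) \<kappa> by (intro mult_right_mono powr_mono2') auto
  finally show ?thesis .
qed

section \<open>Calculus at a minimum\<close>

lemma DERIV_at_local_min:
  fixes g g' :: "real \<Rightarrow> real"
  assumes \<sigma>: "0 < \<sigma>" and min: "\<And>s. \<bar>s\<bar> < \<sigma> \<Longrightarrow> g 0 \<le> g s"
    and g: "\<And>s. \<bar>s\<bar> < \<sigma> \<Longrightarrow> (g has_real_derivative g' s) (at s)"
    and g': "(g' has_real_derivative L) (at 0)"
  shows "g' 0 = 0" and "0 \<le> L"
proof -
  show crit: "g' 0 = 0" using DERIV_local_min [OF g [of 0]] \<sigma> min by simp
  show "0 \<le> L"
  proof (rule ccontr)
    assume "\<not> 0 \<le> L"
    then obtain e where "0 < e" and dec: "\<And>h. 0 < h \<Longrightarrow> h < e \<Longrightarrow> g' h < 0"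
      using DERIV_neg_dec_right [OF g'] crit by force
    define h where "h = min e \<sigma> / 2"
    have h: "0 < h" "h < e" "h < \<sigma>" unfolding h_def using \<open>0 < e\<close> \<sigma> by auto
    obtain \<xi> where \<xi>: "0 < \<xi>" "\<xi> < h" "g h - g 0 = (h - 0) * g' \<xi>"
      using MVT2 [OF h(1), of g g'] g h(3) by auto
    moreover have "h * g' \<xi> < 0" using dec [of \<xi>] \<xi> h by (simp add: mult_pos_neg)
    ultimately show False using min [of h] h by simp
  qed
qed

lemma DERIV_nonpos_at_min_from_left:
  fixes h :: "real \<Rightarrow> real"
  assumes "(h has_real_derivative D) (at t)" "a < t" and min: "\<And>s. a \<le> s \<Longrightarrow> s \<le> t \<Longrightarrow> h t \<le> h s"
  shows "D \<le> 0"
proof (rule ccontr)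
  assume "\<not> D \<le> 0"
  then obtain e where "0 < e" and inc: "\<And>y. 0 < y \<Longrightarrow> y < e \<Longrightarrow> h (t - y) < h t"
    using DERIV_pos_inc_left [OF assms(1)] by force
  define y where "y = min e (t - a) / 2"
  have "0 < y" "y < e" "y \<le> t - a" unfolding y_def using \<open>0 < e\<close> assms(2) by auto
  with inc [of y] min [of "t - y"] show False by simp
qed

lemma has_real_derivative_along_line:
  fixes f :: "'a::real_inner \<Rightarrow> real"
  assumes "(f has_derivative (\<lambda>h. D \<bullet> h)) (at (x + s *\<^sub>R e))"
  shows "((\<lambda>s. f (x + s *\<^sub>R e)) has_real_derivative D \<bullet> e) (at s)"
proof -
  have "((\<lambda>s. x + s *\<^sub>R e) has_derivative (\<lambda>h. h *\<^sub>R e)) (at s)"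
    by (auto intro!: derivative_eq_intros)
  from has_derivative_compose [OF this assms] show ?thesis
    by (simp add: has_field_derivative_def mult_commute_abs)
qed

lemma has_real_derivative_along_line_matrix:
  fixes F :: "real^'n \<Rightarrow> real^'n"
  assumes "(F has_derivative (\<lambda>h. A *v h)) (at x)"
  shows "((\<lambda>s. F (x + s *\<^sub>R e) \<bullet> e) has_real_derivative (A *v e) \<bullet> e) (at 0)"
proof -
  have "((\<lambda>s. x + s *\<^sub>R e) has_derivative (\<lambda>h. h *\<^sub>R e)) (at 0)"
    by (auto intro!: derivative_eq_intros)
  from has_derivative_compose [OF this] assms
  have "((\<lambda>s. F (x + s *\<^sub>R e)) has_derivative (\<lambda>h. A *v (h *\<^sub>R e))) (at 0)" by simp
  from has_derivative_inner_left [OF this, of e] show ?thesis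
    by (simp add: has_field_derivative_def matrix_vector_mult_scaleR mult_commute_abs)
qed

lemma gradient_hessian_at_min_along_axis:
  fixes u V :: "real^'n \<Rightarrow> real" and Du :: "real^'n \<Rightarrow> real^'n"
  assumes \<sigma>: "0 < \<sigma>"
    and min: "\<And>s. \<bar>s\<bar> < \<sigma> \<Longrightarrow> u x - V x \<le> u (x + s *\<^sub>R axis i 1) - V (x + s *\<^sub>R axis i 1)"
    and du: "\<And>s. \<bar>s\<bar> < \<sigma> \<Longrightarrow>
      (u has_derivative (\<lambda>h. Du (x + s *\<^sub>R axis i 1) \<bullet> h)) (at (x + s *\<^sub>R axis i 1))"
    and d2u: "(Du has_derivative (\<lambda>h. H *v h)) (at x)"
    and dV: "\<And>s. \<bar>s\<bar> < \<sigma> \<Longrightarrow> ((\<lambda>s. V (x + s *\<^sub>R axis i 1)) has_real_derivative V' s) (at s)"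
    and d2V: "(V' has_real_derivative V'') (at 0)"
  shows "Du x $ i = V' 0" and "V'' \<le> H $ i $ i"
proof -
  let ?e = "axis i (1::real)"
  define g where "g s = u (x + s *\<^sub>R ?e) - V (x + s *\<^sub>R ?e)" for s
  define g' where "g' s = Du (x + s *\<^sub>R ?e) \<bullet> ?e - V' s" for s
  have g_min: "g 0 \<le> g s" if "\<bar>s\<bar> < \<sigma>" for s
    unfolding g_def using min [OF that] by simp
  have g: "(g has_real_derivative g' s) (at s)" if "\<bar>s\<bar> < \<sigma>" for s
    unfolding g_def [abs_def] g'_def
    using DERIV_diff [OF has_real_derivative_along_line [OF du [OF that]] dV [OF that]] by simp
  have g': "(g' has_real_derivative (H *v ?e) \<bullet> ?e - V'') (at 0)"
    unfolding g'_def [abs_def] by (rule DERIV_diff [OF has_real_derivative_along_line_matrix [OF d2u] d2V])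
  have "g' 0 = 0" and "0 \<le> (H *v ?e) \<bullet> ?e - V''"
    using DERIV_at_local_min [OF \<sigma> g_min g g'] by auto
  then show "Du x $ i = V' 0" and "V'' \<le> H $ i $ i"
    unfolding g'_def by (simp_all add: matrix_vector_mult_basis column_def inner_axis)
qed

lemma parabolic_touching_from_below:
  fixes u W :: "real^'n \<Rightarrow> real \<Rightarrow> real" and Du :: "real^'n \<Rightarrow> real^'n"
  assumes \<sigma>: "0 < \<sigma>" and "a < t"
    and min_space: "\<And>i s. \<bar>s\<bar> < \<sigma> \<Longrightarrow>
      u x t - W x t \<le> u (x + s *\<^sub>R axis i 1) t - W (x + s *\<^sub>R axis i 1) t"
    and min_time: "\<And>s. a \<le> s \<Longrightarrow> s \<le> t \<Longrightarrow> u x t - W x t \<le> u x s - W x s"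
    and du: "\<And>i s. \<bar>s\<bar> < \<sigma> \<Longrightarrow>
      ((\<lambda>y. u y t) has_derivative (\<lambda>h. Du (x + s *\<^sub>R axis i 1) \<bullet> h)) (at (x + s *\<^sub>R axis i 1))"
    and d2u: "(Du has_derivative (\<lambda>h. H *v h)) (at x)"
    and ut: "((\<lambda>s. u x s) has_real_derivative Ut) (at t)"
    and dW: "\<And>i s. \<bar>s\<bar> < \<sigma> \<Longrightarrow> ((\<lambda>s. W (x + s *\<^sub>R axis i 1) t) has_real_derivative W' i s) (at s)"
    and d2W: "\<And>i. (W' i has_real_derivative W'' i) (at 0)"
    and Wt: "((\<lambda>s. W x s) has_real_derivative Wt) (at t)"
  shows "Du x = (\<chi> i. W' i 0)" and "Ut - (\<Sum>i\<in>UNIV. H $ i $ i) \<le> Wt - (\<Sum>i\<in>UNIV. W'' i)"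
proof -
  note along_axis = gradient_hessian_at_min_along_axis
    [OF \<sigma>, where u = "\<lambda>y. u y t" and V = "\<lambda>y. W y t", OF min_space du d2u dW d2W]
  show "Du x = (\<chi> i. W' i 0)" using along_axis(1) by (simp add: vec_eq_iff)
  have "Ut - Wt \<le> 0"
    by (rule DERIV_nonpos_at_min_from_left [OF DERIV_diff [OF ut Wt] \<open>a < t\<close>])
      (use min_time in simp)
  moreover have "(\<Sum>i\<in>UNIV. W'' i) \<le> (\<Sum>i\<in>UNIV. H $ i $ i)" using along_axis(2) by (rule sum_mono)
  ultimately show "Ut - (\<Sum>i\<in>UNIV. H $ i $ i) \<le> Wt - (\<Sum>i\<in>UNIV. W'' i)" by linarith
qed

section \<open>The barrier\<close>

definition box_barrier :: "real \<Rightarrow> ('n::finite \<Rightarrow> real) \<Rightarrow> ('n \<Rightarrow> real) \<Rightarrow> real^'n \<Rightarrow> real" where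
  "box_barrier \<alpha> r z x = (\<Sum>j\<in>UNIV. psi \<alpha> (r j) (z j) (x $ j))"

lemma box_barrier_le_psi:
  assumes "\<And>j. 0 < r j" "\<And>j. \<bar>x $ j - z j\<bar> < r j"
  shows "box_barrier \<alpha> r z x \<le> psi \<alpha> (r i) (z i) (x $ i)"
proof -
  have "box_barrier \<alpha> r z x = psi \<alpha> (r i) (z i) (x $ i) + (\<Sum>j\<in>UNIV - {i}. psi \<alpha> (r j) (z j) (x $ j))"
    unfolding box_barrier_def by (rule sum.remove) auto
  moreover have "(\<Sum>j\<in>UNIV - {i}. psi \<alpha> (r j) (z j) (x $ j)) \<le> 0"
    using psi_nonpos assms by (intro sum_nonpos) blast
  ultimately show ?thesis by linarith
qed

lemma box_barrier_nonpos:
  "(\<And>j. 0 < r j) \<Longrightarrow> (\<And>j. \<bar>x $ j - z j\<bar> < r j) \<Longrightarrow> box_barrier \<alpha> r z x \<le> 0"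
  using box_barrier_le_psi psi_nonpos by (meson order_trans)

lemma box_barrier_le_near_face:
  assumes "\<And>j. 0 < r j" "\<And>j. \<bar>x $ j - z j\<bar> < r j" "0 < d" "d \<le> r i" "0 \<le> \<alpha>"
    and "0 < \<delta>" "\<delta> \<le> 1/2" "(1 - \<delta>) * r i \<le> \<bar>x $ i - z i\<bar>"
  shows "box_barrier \<alpha> r z x \<le> d powr \<alpha> * (1 - 1 / (2 * \<delta>))"
proof -
  have "box_barrier \<alpha> r z x \<le> psi \<alpha> (r i) (z i) (x $ i)" using assms(1,2) by (rule box_barrier_le_psi)
  also have "\<dots> \<le> r i powr \<alpha> * (1 - 1 / (2 * \<delta>))" using assms by (intro psi_le_near_edge) auto
  also have "\<dots> \<le> d powr \<alpha> * (1 - 1 / (2 * \<delta>))"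
    using assms by (intro mult_right_mono_neg powr_mono2) (auto simp: field_simps)
  finally show ?thesis .
qed

lemma box_barrier_at_centre:
  fixes k :: "'n::finite"
  assumes "0 < x $ k"
  shows "box_barrier \<alpha> (\<lambda>i. if i = k then 2 * x $ k else x $ k) (\<lambda>i. if i = k then 0 else x $ i) x
    = - ((2 * x $ k) powr \<alpha> / 3)"
proof -
  have "box_barrier \<alpha> (\<lambda>i. if i = k then 2 * x $ k else x $ k) (\<lambda>i. if i = k then 0 else x $ i) x
      = psi \<alpha> (2 * x $ k) 0 (x $ k) + (\<Sum>j\<in>UNIV - {k}. psi \<alpha> (x $ k) (x $ j) (x $ j))"
    unfolding box_barrier_def by (subst sum.remove [of _ k]) (auto intro!: sum.cong)
  also have "\<dots> = (2 * x $ k) powr \<alpha> * Psi (1/2)" using assms by (simp add: psi_def Psi_def)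
  finally show ?thesis by (simp add: Psi_def power2_eq_square)
qed

lemma continuous_on_box_barrier:
  assumes "\<And>j. 0 < r j"
  shows "continuous_on {x. \<forall>j. \<bar>x $ j - z j\<bar> < r j} (box_barrier \<alpha> r z)"
  unfolding box_barrier_def [abs_def] psi_def Psi_def
proof (intro continuous_intros ballI)
  fix x j assume "x \<in> {x. \<forall>j. \<bar>x $ j - z j\<bar> < r j}"
  then have "0 < 1 - ((x $ j - z j) / r j)\<^sup>2"
    using assms by (intro one_minus_square_pos abs_divide_less_1) auto
  then show "1 - ((x $ j - z j) / r j)\<^sup>2 \<noteq> 0" by simp
qed (use assms in \<open>auto simp: less_imp_neq [symmetric]\<close>)

lemma box_barrier_along_axis:
  assumes "0 < r i" "\<bar>x $ i + s - z i\<bar> < r i"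
  shows "((\<lambda>s. box_barrier \<alpha> r z (x + s *\<^sub>R axis i 1)) has_real_derivative
    psi' \<alpha> (r i) (z i) (x $ i + s)) (at s)"
proof -
  have split: "box_barrier \<alpha> r z (x + s *\<^sub>R axis i 1)
      = psi \<alpha> (r i) (z i) (x $ i + s) + (\<Sum>j\<in>UNIV - {i}. psi \<alpha> (r j) (z j) (x $ j))" for s
  proof -
    have "box_barrier \<alpha> r z (x + s *\<^sub>R axis i 1) = psi \<alpha> (r i) (z i) (x $ i + s)
        + (\<Sum>j\<in>UNIV - {i}. psi \<alpha> (r j) (z j) ((x + s *\<^sub>R axis i 1) $ j))"
      unfolding box_barrier_def by (subst sum.remove [of _ i]) (auto simp: axis_def)
    also have "(\<Sum>j\<in>UNIV - {i}. psi \<alpha> (r j) (z j) ((x + s *\<^sub>R axis i 1) $ j))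
        = (\<Sum>j\<in>UNIV - {i}. psi \<alpha> (r j) (z j) (x $ j))"
      by (intro sum.cong) (auto simp: axis_def)
    finally show ?thesis .
  qed
  have "((\<lambda>s. x $ i + s) has_real_derivative 1) (at s)" by (auto intro!: derivative_eq_intros)
  from DERIV_chain2 [OF psi_has_real_derivative [OF assms] this]
  show ?thesis unfolding split by (auto intro!: derivative_eq_intros)
qed

lemma time_term_absorbed:
  fixes \<kappa> :: real
  assumes p: "2 \<le> p" and pos: "0 < \<kappa>" "0 < c" "0 < b" "0 < K" "0 \<le> \<xi>"
    and small: "\<xi> / K \<le> \<kappa> / 2 * c powr (p - 2)"
  shows "b\<^sup>2 * \<xi> / K \<le> \<kappa> / 2 * (c + b) powr p"
proof -
  have "b\<^sup>2 \<le> (c + b)\<^sup>2" using pos by (intro power_mono) auto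
  then have "b\<^sup>2 * \<xi> / K \<le> (c + b)\<^sup>2 * (\<xi> / K)"
    using pos by (simp add: divide_right_mono mult_right_mono)
  also have "\<dots> \<le> (c + b)\<^sup>2 * (\<kappa> / 2 * (c + b) powr (p - 2))"
  proof -
    have "c powr (p - 2) \<le> (c + b) powr (p - 2)" using pos p by (intro powr_mono2) auto
    then have "\<kappa> / 2 * c powr (p - 2) \<le> \<kappa> / 2 * (c + b) powr (p - 2)" using pos by simp
    then show ?thesis using small by (intro mult_left_mono) auto
  qed
  also have "\<dots> = \<kappa> / 2 * ((c + b) powr 2 * (c + b) powr (p - 2))" using pos by simp
  also have "\<dots> = \<kappa> / 2 * (c + b) powr p" by (simp add: powr_add [symmetric])
  finally show ?thesis .
qed

lemma norm_powr_ge_weighted_components: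
  fixes G :: "real^'n" and f :: "'n \<Rightarrow> real" and \<kappa> :: real
  assumes "0 < p" "0 < \<kappa>" "\<kappa> * (CARD('n) + 1) \<le> 1"
    and "0 \<le> a" "a \<le> norm G" "\<And>i. \<bar>f i\<bar> \<le> norm G"
  shows "\<kappa> * a powr p + \<kappa> * (\<Sum>i\<in>UNIV. \<bar>f i\<bar> powr p) \<le> norm G powr p"
proof -
  have f: "\<bar>f i\<bar> powr p \<le> norm G powr p" for i using assms by (auto intro!: powr_mono2)
  have "(\<Sum>i\<in>UNIV. \<bar>f i\<bar> powr p) \<le> CARD('n) * norm G powr p"
    using sum_bounded_above [of UNIV "\<lambda>i. \<bar>f i\<bar> powr p", OF f] by (simp add: mult.commute)
  moreover have "a powr p \<le> norm G powr p" using assms by (auto intro!: powr_mono2)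
  ultimately have "a powr p + (\<Sum>i\<in>UNIV. \<bar>f i\<bar> powr p) \<le> (CARD('n) + 1) * norm G powr p"
    by (simp add: algebra_simps)
  then have "\<kappa> * (a powr p + (\<Sum>i\<in>UNIV. \<bar>f i\<bar> powr p)) \<le> (\<kappa> * (CARD('n) + 1)) * norm G powr p"
    using assms(2) by (simp add: mult_left_mono)
  also have "\<dots> \<le> norm G powr p" using assms(2,3) by (intro mult_left_le_one_le) auto
  finally show ?thesis by (simp add: distrib_left)
qed

text \<open>Since \<open>(\<alpha> - 1) p = \<alpha> - 2\<close>, what the profiles leave unabsorbed is of order \<open>d\<^sup>\<alpha>\<^sup>-\<^sup>2\<close>;
  \<open>large_c\<close> lets the slope \<open>c\<close> of the linear part dominate it.\<close>

lemma barrier_strict_subsolution: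
  fixes k :: "'n::finite" and x :: "real^'n" and \<kappa> :: real
  assumes p: "2 \<le> p" "(\<alpha> - 1) * p = \<alpha> - 2" "\<alpha> \<le> 2"
    and \<kappa>: "0 < \<kappa>" "\<kappa> * (CARD('n) + 1) \<le> 1"
    and r: "0 < d" "\<And>j. d \<le> r j"
    and x: "\<And>j. \<bar>x $ j - z j\<bar> < r j" "z k \<le> x $ k" "0 \<le> x $ k"
    and pos: "0 < c" "0 < b" "0 < K"
    and small_x: "x $ k / K \<le> \<kappa> / 2 * c powr (p - 2)"
    and large_c: "CARD('n) * (d powr (\<alpha> - 2) * (8 * (8 / \<kappa>)^3)) < \<kappa> / 2 * c powr p"
  shows "b\<^sup>2 * x $ k / K - (\<Sum>i\<in>UNIV. psi'' \<alpha> (r i) (z i) (x $ i))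
    < norm (\<chi> i. psi' \<alpha> (r i) (z i) (x $ i) - (if i = k then c + b else 0)) powr p"
proof -
  define S where "S = d powr (\<alpha> - 2) * (8 * (8 / \<kappa>)^3)"
  define f' where "f' i = psi' \<alpha> (r i) (z i) (x $ i)" for i
  define f'' where "f'' i = psi'' \<alpha> (r i) (z i) (x $ i)" for i
  define G :: "real^'n" where "G = (\<chi> i. f' i - (if i = k then c + b else 0))"
  have "\<kappa> * 1 \<le> \<kappa> * (CARD('n) + 1)" using \<kappa> by (intro mult_left_mono) auto
  then have \<kappa>1: "\<kappa> \<le> 1" using \<kappa>(2) by linarith
  have f'k: "f' k \<le> 0" unfolding f'_def using r x by (intro psi'_nonpos) (auto intro: less_le_trans)
  have "\<bar>f' i\<bar> \<le> \<bar>G $ i\<bar>" for i using f'k pos unfolding G_def by (cases "i = k") auto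
  moreover have "c + b \<le> \<bar>G $ k\<bar>" using f'k pos unfolding G_def by simp
  ultimately have "\<bar>f' i\<bar> \<le> norm G" and "c + b \<le> norm G" for i
    using component_le_norm_cart [of G] by (meson order_trans)+
  then have grad: "\<kappa> * (c + b) powr p + \<kappa> * (\<Sum>i\<in>UNIV. \<bar>f' i\<bar> powr p) \<le> norm G powr p"
    using p \<kappa> pos by (intro norm_powr_ge_weighted_components) auto
  have "- f'' i \<le> \<kappa> * \<bar>f' i\<bar> powr p + S" for i
    using psi''_absorbed_by_gradient [OF p \<kappa>(1) \<kappa>1 r(1) r(2) [of i] x(1) [of i]]
    unfolding f'_def f''_def S_def by linarith
  then have "(\<Sum>i\<in>UNIV. - f'' i) \<le> (\<Sum>i\<in>UNIV. \<kappa> * \<bar>f' i\<bar> powr p + S)"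
    by (intro sum_mono)
  then have curv: "- (\<Sum>i\<in>UNIV. f'' i) \<le> \<kappa> * (\<Sum>i\<in>UNIV. \<bar>f' i\<bar> powr p) + CARD('n) * S"
    by (simp add: sum.distrib sum_distrib_left sum_negf)
  have "\<kappa> / 2 * c powr p \<le> \<kappa> / 2 * (c + b) powr p"
    using pos p \<kappa> by (intro mult_left_mono powr_mono2) auto
  then show ?thesis
    using time_term_absorbed [OF p(1) \<kappa>(1) pos x(3) small_x] grad curv large_c
    unfolding G_def f'_def f''_def S_def by linarith
qed

lemma continuous_on_barrier:
  assumes "\<And>j. 0 < r j"
  shows "continuous_on {(x, t). (\<forall>j. \<bar>x $ j - z j\<bar> < r j) \<and> \<theta> < t}
    (\<lambda>(x, t). - (c + K / (t - \<theta>)) * x $ k + box_barrier \<alpha> r z x)"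
proof -
  let ?S = "{(x, t). (\<forall>j. \<bar>x $ j - z j\<bar> < r j) \<and> \<theta> < t}"
  have "continuous_on ?S (\<lambda>y. box_barrier \<alpha> r z (fst y))"
    by (rule continuous_on_compose2 [OF continuous_on_box_barrier [OF assms] continuous_on_fst]) auto
  moreover have "continuous_on ?S (\<lambda>y. - (c + K / (snd y - \<theta>)) * fst y $ k)"
    by (intro continuous_intros) auto
  ultimately show ?thesis by (simp add: case_prod_unfold continuous_on_add)
qed

lemma barrier_has_derivative_along_axis:
  fixes k :: "'n::finite" and x :: "real^'n"
  assumes "0 < r i" "\<bar>x $ i + s - z i\<bar> < r i"
  shows "((\<lambda>s. - (c + K / (t - \<theta>)) * (x + s *\<^sub>R axis i 1) $ k + box_barrier \<alpha> r z (x + s *\<^sub>R axis i 1))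
    has_real_derivative psi' \<alpha> (r i) (z i) (x $ i + s) - (if i = k then c + K / (t - \<theta>) else 0)) (at s)"
proof -
  have "((\<lambda>s. - (c + K / (t - \<theta>)) * (x $ k + s * axis i 1 $ k) + box_barrier \<alpha> r z (x + s *\<^sub>R axis i 1))
      has_real_derivative - (c + K / (t - \<theta>)) * axis i 1 $ k + psi' \<alpha> (r i) (z i) (x $ i + s)) (at s)"
    using box_barrier_along_axis [where r = r and z = z and i = i, OF assms]
    by (auto intro!: derivative_eq_intros)
  moreover have "- (c + K / (t - \<theta>)) * axis i 1 $ k + psi' \<alpha> (r i) (z i) (x $ i + s)
      = psi' \<alpha> (r i) (z i) (x $ i + s) - (if i = k then c + K / (t - \<theta>) else 0)"
    by (simp add: axis_def)
  ultimately show ?thesis by simp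
qed

lemma barrier_has_derivative_in_time:
  assumes "\<theta> < t" "K \<noteq> 0"
  shows "((\<lambda>t. - (c + K / (t - \<theta>)) * x $ k + box_barrier \<alpha> r z x) has_real_derivative
    (K / (t - \<theta>))\<^sup>2 * x $ k / K) (at t)"
proof -
  have "((\<lambda>t. - (c + K / (t - \<theta>)) * x $ k + box_barrier \<alpha> r z x) has_real_derivative
      K * x $ k / (t - \<theta>)\<^sup>2) (at t)"
    using assms(1) by (auto intro!: derivative_eq_intros) (simp add: field_simps power2_eq_square)
  moreover have "K * x $ k / (t - \<theta>)\<^sup>2 = (K / (t - \<theta>))\<^sup>2 * x $ k / K"
    using assms(2) by (simp add: power2_eq_square)
  ultimately show ?thesis by simp
qed

section \<open>Parabolic boxes\<close>

definition para_box :: "'n::finite \<Rightarrow> ('n \<Rightarrow> real) \<Rightarrow> ('n \<Rightarrow> real) \<Rightarrow> real \<Rightarrow> real \<Rightarrow> ((real^'n) \<times> real) set"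
  where "para_box k z \<rho> a b = {x. 0 \<le> x $ k \<and> (\<forall>i. \<bar>x $ i - z i\<bar> \<le> \<rho> i)} \<times> {a..b}"

lemma compact_para_box:
  fixes k :: "'n::finite"
  shows "compact (para_box k z \<rho> a b)"
proof -
  let ?B = "{x::real^'n. 0 \<le> x $ k \<and> (\<forall>i. \<bar>x $ i - z i\<bar> \<le> \<rho> i)}"
  have "closed ?B"
    by (intro closed_Collect_conj closed_Collect_all closed_Collect_le continuous_intros)
  moreover have "norm x \<le> (\<Sum>i\<in>UNIV. \<bar>z i\<bar> + \<bar>\<rho> i\<bar>)" if "x \<in> ?B" for x
  proof -
    have "norm x \<le> (\<Sum>i\<in>UNIV. \<bar>x $ i\<bar>)" by (rule norm_le_l1_cart)
    also have "\<dots> \<le> (\<Sum>i\<in>UNIV. \<bar>z i\<bar> + \<bar>\<rho> i\<bar>)"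
    proof (intro sum_mono)
      fix i have "\<bar>x $ i - z i\<bar> \<le> \<rho> i" using that by simp
      then show "\<bar>x $ i\<bar> \<le> \<bar>z i\<bar> + \<bar>\<rho> i\<bar>" by linarith
    qed
    finally show ?thesis .
  qed
  then have "bounded ?B" unfolding bounded_iff by blast
  ultimately show ?thesis
    unfolding para_box_def by (intro compact_Times compact_Icc) (simp add: compact_eq_bounded_closed)
qed

lemma para_box_mono:
  "(\<And>i. \<rho> i \<le> \<rho>' i) \<Longrightarrow> a' \<le> a \<Longrightarrow> b \<le> b' \<Longrightarrow> para_box k z \<rho> a b \<subseteq> para_box k z \<rho>' a' b'"
  unfolding para_box_def by (auto intro: order_trans)

lemma closure_QQ: "closure (QQ k) = {x. 0 \<le> x $ k} \<times> {..0}"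
proof -
  have "half_space k = {x. 0 < axis k 1 \<bullet> x}"
    unfolding half_space_def by (simp add: inner_commute inner_axis)
  then have "closure (half_space k) = {x. 0 \<le> axis k 1 \<bullet> x}"
    by simp
  then show ?thesis unfolding QQ_def closure_Times by (simp add: inner_commute inner_axis)
qed

lemma para_box_subset_closure_QQ: "b \<le> 0 \<Longrightarrow> para_box k z \<rho> a b \<subseteq> closure (QQ k)"
  unfolding para_box_def closure_QQ by auto

lemma para_box_in_open_box:
  fixes x :: "real^'n::finite"
  assumes "(x, t) \<in> para_box k z (\<lambda>i. (1 - \<delta>) * r i) a T" "0 < \<delta>" "\<And>j. 0 < r j"
  shows "\<bar>x $ j - z j\<bar> < r j"
proof -
  have "\<bar>x $ j - z j\<bar> \<le> (1 - \<delta>) * r j" using assms(1) unfolding para_box_def by simp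
  also have "\<dots> < r j" using assms(2) assms(3) [of j] by simp
  finally show ?thesis .
qed

lemma axis_segments_in_para_box:
  fixes x :: "real^'n::finite"
  assumes "(x, t) \<in> para_box k z \<rho> a b" "0 < x $ k" "\<And>i. \<bar>x $ i - z i\<bar> < \<rho> i"
  obtains \<sigma> where "0 < \<sigma>" "\<sigma> \<le> x $ k" "\<And>j. \<bar>x $ j - z j\<bar> + \<sigma> \<le> \<rho> j"
    and "\<And>i s. \<bar>s\<bar> < \<sigma> \<Longrightarrow> (x + s *\<^sub>R axis i 1, t) \<in> para_box k z \<rho> a b"
proof
  define \<sigma> where "\<sigma> = min (x $ k) (Min (range (\<lambda>i. \<rho> i - \<bar>x $ i - z i\<bar>)))"
  show "0 < \<sigma>" unfolding \<sigma>_def using assms(2,3) by (auto simp: less_diff_eq)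
  show "\<sigma> \<le> x $ k" unfolding \<sigma>_def by simp
  show margin: "\<bar>x $ j - z j\<bar> + \<sigma> \<le> \<rho> j" for j
  proof -
    have "Min (range (\<lambda>i. \<rho> i - \<bar>x $ i - z i\<bar>)) \<le> \<rho> j - \<bar>x $ j - z j\<bar>" by (rule Min_le) auto
    moreover have "\<sigma> \<le> Min (range (\<lambda>i. \<rho> i - \<bar>x $ i - z i\<bar>))" unfolding \<sigma>_def by simp
    ultimately show ?thesis by linarith
  qed
  fix i and s :: real assume "\<bar>s\<bar> < \<sigma>"
  moreover have "\<bar>x $ i + s - z i\<bar> \<le> \<bar>x $ i - z i\<bar> + \<bar>s\<bar>" by linarith
  ultimately show "(x + s *\<^sub>R axis i 1, t) \<in> para_box k z \<rho> a b"
    using assms(1) margin [of i] \<open>\<sigma> \<le> x $ k\<close> unfolding para_box_def by (auto simp: axis_def)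
qed

lemma minimizer_in_parabolic_interior:
  fixes u W :: "real^'n \<Rightarrow> real \<Rightarrow> real" and k :: "'n::finite"
  assumes P: "(xs, ts) \<in> P" "a \<le> ts" and below: "u xs ts - W xs ts < - \<epsilon>" and "0 < \<epsilon>"
    and u_ge: "\<And>x t. (x, t) \<in> P \<Longrightarrow> - M \<le> u x t"
    and u_near: "\<And>x t. (x, t) \<in> P \<Longrightarrow> x $ k < \<eta> \<Longrightarrow> - \<epsilon> < u x t"
    and W_nonpos: "\<And>x t. (x, t) \<in> P \<Longrightarrow> W x t \<le> 0"
    and W_face: "\<And>x t i. (x, t) \<in> P \<Longrightarrow> \<rho> i \<le> \<bar>x $ i - z i\<bar> \<Longrightarrow> W x t \<le> - (M + 1)"
    and W_bottom: "\<And>x. (x, a) \<in> P \<Longrightarrow> \<eta> \<le> x $ k \<Longrightarrow> W x a \<le> - (M + 1)"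
  shows "\<eta> \<le> xs $ k" and "\<And>i. \<bar>xs $ i - z i\<bar> < \<rho> i" and "a < ts"
proof -
  show "\<eta> \<le> xs $ k" using u_near [OF P(1)] W_nonpos [OF P(1)] below by force
  show "\<bar>xs $ i - z i\<bar> < \<rho> i" for i
    using W_face [OF P(1), of i] u_ge [OF P(1)] below \<open>0 < \<epsilon>\<close> by force
  have "ts \<noteq> a" using W_bottom [of xs] P u_ge [OF P(1)] below \<open>0 < \<epsilon>\<close> \<open>\<eta> \<le> xs $ k\<close> by force
  then show "a < ts" using P(2) by simp
qed

lemma ancient_solution_bounded_below:
  assumes "ancient_solution p k u" "b \<le> 0"
  shows "\<exists>M\<ge>0. \<forall>(x, t)\<in>para_box k z \<rho> a b. - M \<le> u x t"
proof -
  have "continuous_on (para_box k z \<rho> a b) (\<lambda>(x, t). u x t)"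
    using assms unfolding ancient_solution_def by (meson continuous_on_subset para_box_subset_closure_QQ)
  then have "bounded ((\<lambda>(x, t). u x t) ` para_box k z \<rho> a b)"
    by (intro compact_imp_bounded compact_continuous_image compact_para_box)
  then obtain M where "\<forall>(x, t)\<in>para_box k z \<rho> a b. \<bar>u x t\<bar> \<le> M"
    unfolding bounded_real by fast
  then show ?thesis by (intro exI [of _ "\<bar>M\<bar>"]) fastforce
qed

lemma ancient_solution_near_boundary:
  assumes "ancient_solution p k u" "0 < \<epsilon>" "b < 0" "z k = 0" "0 \<le> \<rho> k"
  shows "\<exists>\<eta>>0. \<forall>(x, t)\<in>para_box k z \<rho> a b. x $ k < \<eta> \<longrightarrow> - \<epsilon> < u x t"
proof -
  let ?P = "para_box k z \<rho> a b"
  have "continuous_on ?P (\<lambda>(x, t). u x t)"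
    using assms unfolding ancient_solution_def
    by (meson continuous_on_subset para_box_subset_closure_QQ less_imp_le)
  then have "uniformly_continuous_on ?P (\<lambda>(x, t). u x t)"
    by (intro compact_uniformly_continuous compact_para_box)
  then obtain \<eta> where "0 < \<eta>"
    and \<eta>: "\<And>y y'. y \<in> ?P \<Longrightarrow> y' \<in> ?P \<Longrightarrow> dist y' y < \<eta> \<Longrightarrow>
      dist ((\<lambda>(x, t). u x t) y') ((\<lambda>(x, t). u x t) y) < \<epsilon>"
    using \<open>0 < \<epsilon>\<close> unfolding uniformly_continuous_on_def by metis
  have "- \<epsilon> < u x t" if xt: "(x, t) \<in> ?P" and "x $ k < \<eta>" for x t
  proof -
    define x' where "x' = x - (x $ k) *\<^sub>R axis k 1"
    have x': "x' $ j = (if j = k then 0 else x $ j)" for j unfolding x'_def by (simp add: axis_def)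
    have "(x', t) \<in> ?P" using xt assms(4,5) unfolding para_box_def by (auto simp: x')
    moreover have "dist (x', t) (x, t) < \<eta>"
      using xt \<open>x $ k < \<eta>\<close> unfolding x'_def para_box_def by (simp add: dist_Pair_Pair dist_norm)
    ultimately have "\<bar>u x' t - u x t\<bar> < \<epsilon>" using \<eta> [OF xt] by (fastforce simp: dist_real_def)
    moreover have "u x' t = 0"
      using assms(1,3) xt unfolding ancient_solution_def para_box_def by (auto simp: x')
    ultimately show ?thesis by simp
  qed
  with \<open>0 < \<eta>\<close> show ?thesis by blast
qed

lemma barrier_bounds_on_para_box:
  fixes x :: "real^'n::finite" and k :: 'n and r z :: "'n \<Rightarrow> real" and c K \<theta> \<alpha> \<delta> t :: real
  defines "W \<equiv> - (c + K / (t - \<theta>)) * x $ k + box_barrier \<alpha> r z x"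
  assumes P: "(x, t) \<in> para_box k z (\<lambda>i. (1 - \<delta>) * r i) a T"
    and "\<theta> < a" and pos: "0 < c" "0 < K" and "0 < \<delta>" and r_pos: "\<And>j. 0 < r j"
  shows "W \<le> - ((c + K / (t - \<theta>)) * x $ k)" and "W \<le> 0"
    and "0 < d \<Longrightarrow> d \<le> r i \<Longrightarrow> 0 \<le> \<alpha> \<Longrightarrow> \<delta> \<le> 1/2 \<Longrightarrow> (1 - \<delta>) * r i \<le> \<bar>x $ i - z i\<bar> \<Longrightarrow>
      W \<le> d powr \<alpha> * (1 - 1 / (2 * \<delta>))"
proof -
  have in_box: "\<bar>x $ j - z j\<bar> < r j" for j using para_box_in_open_box [OF P \<open>0 < \<delta>\<close> r_pos] .
  have "0 \<le> x $ k" "\<theta> < t" using P \<open>\<theta> < a\<close> unfolding para_box_def by auto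
  then have linear_part: "0 \<le> (c + K / (t - \<theta>)) * x $ k"
    using pos by (intro mult_nonneg_nonneg add_nonneg_nonneg) auto
  have W_eq: "W = box_barrier \<alpha> r z x - (c + K / (t - \<theta>)) * x $ k"
    unfolding W_def by (simp add: algebra_simps)
  moreover have "box_barrier \<alpha> r z x \<le> 0" using box_barrier_nonpos [OF r_pos in_box] .
  ultimately show "W \<le> - ((c + K / (t - \<theta>)) * x $ k)" and "W \<le> 0" using linear_part by linarith+
  show "W \<le> d powr \<alpha> * (1 - 1 / (2 * \<delta>))"
    if "0 < d" "d \<le> r i" "0 \<le> \<alpha>" "\<delta> \<le> 1/2" "(1 - \<delta>) * r i \<le> \<bar>x $ i - z i\<bar>"
    using W_eq linear_part box_barrier_le_near_face [OF r_pos in_box that(1-3) \<open>0 < \<delta>\<close> that(4,5)]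
    by linarith
qed

lemma difference_attains_min_on_para_box:
  fixes u W :: "real^'n \<Rightarrow> real \<Rightarrow> real" and k :: "'n::finite"
  assumes "ancient_solution p k u" "T \<le> 0" "continuous_on (para_box k z \<rho> a T) (\<lambda>(x, t). W x t)"
    and "(y, T) \<in> para_box k z \<rho> a T"
  obtains xs ts where "(xs, ts) \<in> para_box k z \<rho> a T"
    and "\<And>x t. (x, t) \<in> para_box k z \<rho> a T \<Longrightarrow> u xs ts - W xs ts \<le> u x t - W x t"
proof -
  have "continuous_on (para_box k z \<rho> a T) (\<lambda>(x, t). u x t)"
    using assms(1,2) para_box_subset_closure_QQ unfolding ancient_solution_def
    by (meson continuous_on_subset)
  with assms(3) have "continuous_on (para_box k z \<rho> a T) (\<lambda>(x, t). u x t - W x t)"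
    by (simp add: case_prod_unfold continuous_on_diff)
  from continuous_attains_inf [OF compact_para_box _ this] assms(4) that show ?thesis by fast
qed

section \<open>Comparison\<close>

text \<open>At a parabolic minimum of \<open>u - W\<close> we would have \<open>\<nabla>u = \<nabla>W\<close>, \<open>u\<^sub>t \<le> W\<^sub>t\<close> and
  \<open>\<Delta>u \<ge> \<Delta>W\<close>, which contradicts the strict subsolution inequality for \<open>W\<close>.\<close>

lemma barrier_cannot_touch_from_below:
  fixes u :: "real^'n \<Rightarrow> real \<Rightarrow> real" and k :: 'n and r z :: "'n \<Rightarrow> real"
    and c K \<theta> \<alpha> \<kappa> :: real
  defines "W \<equiv> \<lambda>x t. - (c + K / (t - \<theta>)) * x $ k + box_barrier \<alpha> r z x"
  assumes anc: "ancient_solution p k u" and "t < 0" "\<theta> < t" "a < t"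
    and p: "2 \<le> p" "(\<alpha> - 1) * p = \<alpha> - 2" "\<alpha> \<le> 2"
    and \<kappa>: "0 < \<kappa>" "\<kappa> * (CARD('n) + 1) \<le> 1"
    and r: "0 < d" "\<And>j. d \<le> r j"
    and \<sigma>: "0 < \<sigma>" "\<sigma> \<le> x $ k" "\<And>j. \<bar>x $ j - z j\<bar> + \<sigma> \<le> r j" and "z k \<le> x $ k"
    and pos: "0 < c" "0 < K"
    and small_x: "x $ k / K \<le> \<kappa> / 2 * c powr (p - 2)"
    and large_c: "CARD('n) * (d powr (\<alpha> - 2) * (8 * (8 / \<kappa>)^3)) < \<kappa> / 2 * c powr p"
    and min_space: "\<And>i s. \<bar>s\<bar> < \<sigma> \<Longrightarrow>
      u x t - W x t \<le> u (x + s *\<^sub>R axis i 1) t - W (x + s *\<^sub>R axis i 1) t"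
    and min_time: "\<And>s. a \<le> s \<Longrightarrow> s \<le> t \<Longrightarrow> u x t - W x t \<le> u x s - W x s"
  shows False
proof -
  obtain Du D2u ut where sol: "\<And>y s. (y, s) \<in> QQ k \<Longrightarrow>
      ((\<lambda>y. u y s) has_derivative (\<lambda>h. Du y s \<bullet> h)) (at y) \<and>
      ((\<lambda>y. Du y s) has_derivative (\<lambda>h. D2u y s *v h)) (at y) \<and>
      ((\<lambda>s. u y s) has_real_derivative ut y s) (at s) \<and>
      ut y s - (\<Sum>i\<in>UNIV. D2u y s $ i $ i) = norm (Du y s) powr p"
    using anc unfolding ancient_solution_def by fast
  define b where "b = K / (t - \<theta>)"
  define W' where "W' i s = psi' \<alpha> (r i) (z i) (x $ i + s) - (if i = k then c + b else 0)" for i s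
  have "0 < b" unfolding b_def using pos \<open>\<theta> < t\<close> by simp
  have r_pos: "0 < r j" for j using r(1) r(2) [of j] by linarith
  have line_in_QQ: "(x + s *\<^sub>R axis i 1, t) \<in> QQ k" if "\<bar>s\<bar> < \<sigma>" for i s
    using that \<sigma>(2) \<open>t < 0\<close> unfolding QQ_def half_space_def by (auto simp: axis_def)
  have line_in_box: "\<bar>x $ i + s - z i\<bar> < r i" if "\<bar>s\<bar> < \<sigma>" for i s
    using that \<sigma>(3) [of i] by linarith
  have zero_in: "\<bar>0::real\<bar> < \<sigma>" using \<sigma>(1) by simp
  have dW: "((\<lambda>s. W (x + s *\<^sub>R axis i 1) t) has_real_derivative W' i s) (at s)" if "\<bar>s\<bar> < \<sigma>" for i s
    unfolding W_def W'_def b_def by (rule barrier_has_derivative_along_axis [OF r_pos line_in_box [OF that]])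
  have d2W: "(W' i has_real_derivative psi'' \<alpha> (r i) (z i) (x $ i)) (at 0)" for i
  proof -
    have "((\<lambda>s. x $ i + s) has_real_derivative 1) (at 0)" by (auto intro!: derivative_eq_intros)
    from DERIV_chain2 [OF psi'_has_real_derivative [OF r_pos line_in_box [OF zero_in, of i]] this]
    show ?thesis unfolding W'_def [abs_def] by (auto intro!: derivative_eq_intros)
  qed
  have Wt: "((\<lambda>s. W x s) has_real_derivative b\<^sup>2 * x $ k / K) (at t)"
    unfolding W_def b_def
    using barrier_has_derivative_in_time [where K = K and c = c and x = x and k = k and \<alpha> = \<alpha>
        and r = r and z = z, OF \<open>\<theta> < t\<close>] pos by simp
  have du: "((\<lambda>y. u y t) has_derivative (\<lambda>h. Du (x + s *\<^sub>R axis i 1) t \<bullet> h))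
      (at (x + s *\<^sub>R axis i 1))" if "\<bar>s\<bar> < \<sigma>" for i s
    using sol [OF line_in_QQ [OF that]] by blast
  have d2u: "((\<lambda>y. Du y t) has_derivative (\<lambda>h. D2u x t *v h)) (at x)"
    and ut: "((\<lambda>s. u x s) has_real_derivative ut x t) (at t)"
    and pde: "ut x t - (\<Sum>i\<in>UNIV. D2u x t $ i $ i) = norm (Du x t) powr p"
    using sol [OF line_in_QQ [OF zero_in]] by simp_all
  note touching = parabolic_touching_from_below [where Du = "\<lambda>y. Du y t",
      OF \<sigma>(1) \<open>a < t\<close> min_space min_time du d2u ut dW d2W Wt]
  have "norm (\<chi> i. W' i 0) powr p \<le> b\<^sup>2 * x $ k / K - (\<Sum>i\<in>UNIV. psi'' \<alpha> (r i) (z i) (x $ i))"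
    using touching pde by simp
  moreover have "\<bar>x $ j - z j\<bar> < r j" for j using line_in_box [OF zero_in] by simp
  then have "b\<^sup>2 * x $ k / K - (\<Sum>i\<in>UNIV. psi'' \<alpha> (r i) (z i) (x $ i)) < norm (\<chi> i. W' i 0) powr p"
    unfolding W'_def using \<sigma> \<open>z k \<le> x $ k\<close> \<open>0 < b\<close>
    by (simp add: barrier_strict_subsolution [OF p \<kappa> r _ _ _ pos(1) _ pos(2) small_x large_c])
  ultimately show False by simp
qed

lemma barrier_comparison_on_para_box:
  fixes u :: "real^'n \<Rightarrow> real \<Rightarrow> real" and k :: 'n and r z :: "'n \<Rightarrow> real"
    and c K \<theta> \<alpha> \<kappa> :: real
  defines "W \<equiv> \<lambda>x t. - (c + K / (t - \<theta>)) * x $ k + box_barrier \<alpha> r z x"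
  assumes anc: "ancient_solution p k u"
    and p: "2 \<le> p" "(\<alpha> - 1) * p = \<alpha> - 2" "0 \<le> \<alpha>" "\<alpha> \<le> 2"
    and \<kappa>: "0 < \<kappa>" "\<kappa> * (CARD('n) + 1) \<le> 1"
    and r: "0 < d" "\<And>j. d \<le> r j" "r k \<le> 2 * d" and "z k = 0"
    and pos: "0 < c" "0 < K"
    and small_x: "2 * d / K \<le> \<kappa> / 2 * c powr (p - 2)"
    and large_c: "CARD('n) * (d powr (\<alpha> - 2) * (8 * (8 / \<kappa>)^3)) < \<kappa> / 2 * c powr p"
    and t: "\<theta> < a" "T < 0" and "0 < \<epsilon>" "0 < \<eta>" and \<delta>: "0 < \<delta>" "\<delta> \<le> 1/2"
    and face: "d powr \<alpha> * (1 - 1 / (2 * \<delta>)) \<le> - (M + 1)"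
    and bottom: "M + 1 \<le> K / (a - \<theta>) * \<eta>"
    and u_ge: "\<And>x t. (x, t) \<in> para_box k z (\<lambda>i. (1 - \<delta>) * r i) a T \<Longrightarrow> - M \<le> u x t"
    and u_near: "\<And>x t. (x, t) \<in> para_box k z (\<lambda>i. (1 - \<delta>) * r i) a T \<Longrightarrow> x $ k < \<eta> \<Longrightarrow> - \<epsilon> < u x t"
    and y: "(y, T) \<in> para_box k z (\<lambda>i. (1 - \<delta>) * r i) a T"
  shows "W y T - \<epsilon> \<le> u y T"
proof (rule ccontr)
  let ?P = "para_box k z (\<lambda>i. (1 - \<delta>) * r i) a T"
  assume "\<not> W y T - \<epsilon> \<le> u y T"
  have r_pos: "0 < r j" for j using r(1) r(2) [of j] by linarith
  have in_box: "\<bar>x $ j - z j\<bar> < r j" if "(x, t) \<in> ?P" for x t j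
    using para_box_in_open_box [OF that \<delta>(1) r_pos] .
  have in_P: "0 \<le> x $ k" "a \<le> t" "t \<le> T" if "(x, t) \<in> ?P" for x t
    using that unfolding para_box_def by auto
  have "?P \<subseteq> {(x, t). (\<forall>j. \<bar>x $ j - z j\<bar> < r j) \<and> \<theta> < t}"
    using in_box in_P(2) t(1) by fastforce
  then have "continuous_on ?P (\<lambda>(x, t). W x t)" unfolding W_def
    by (rule continuous_on_subset [OF continuous_on_barrier [where r = r, OF r_pos]])
  then obtain xs ts where "(xs, ts) \<in> ?P" and min: "\<And>x t. (x, t) \<in> ?P \<Longrightarrow> u xs ts - W xs ts \<le> u x t - W x t"
    using difference_attains_min_on_para_box [OF anc _ _ y] t(2) by (metis less_imp_le)
  have below: "u xs ts - W xs ts < - \<epsilon>" using min [OF y] \<open>\<not> W y T - \<epsilon> \<le> u y T\<close> by linarith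
  note bounds = barrier_bounds_on_para_box [where c = c and K = K and \<theta> = \<theta> and \<alpha> = \<alpha>,
      OF _ t(1) pos \<delta>(1) r_pos]
  have W_nonpos: "W x t \<le> 0" if "(x, t) \<in> ?P" for x t
    unfolding W_def using bounds(2) [OF that] .
  have W_face: "W x t \<le> - (M + 1)" if "(x, t) \<in> ?P" "(1 - \<delta>) * r i \<le> \<bar>x $ i - z i\<bar>" for x t i
    unfolding W_def using bounds(3) [OF that(1) r(1) r(2) p(3) \<delta>(2) that(2)] face by linarith
  have W_bottom: "W x a \<le> - (M + 1)" if "(x, a) \<in> ?P" "\<eta> \<le> x $ k" for x
  proof -
    have "K / (a - \<theta>) * \<eta> \<le> (c + K / (a - \<theta>)) * x $ k"
      using that(2) pos t(1) \<open>0 < \<eta>\<close> by (intro mult_mono) auto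
    then show ?thesis unfolding W_def using bounds(1) [OF that(1)] bottom by linarith
  qed
  have "a \<le> ts" using in_P [OF \<open>(xs, ts) \<in> ?P\<close>] by simp
  have interior: "\<eta> \<le> xs $ k" "\<And>i. \<bar>xs $ i - z i\<bar> < (1 - \<delta>) * r i" "a < ts"
    by (rule minimizer_in_parabolic_interior [where u = u and W = W and P = ?P and a = a and \<epsilon> = \<epsilon>
        and M = M and \<eta> = \<eta> and k = k and z = z and \<rho> = "\<lambda>i. (1 - \<delta>) * r i"]; fact)+
  then have "0 < xs $ k" using \<open>0 < \<eta>\<close> by linarith
  then obtain \<sigma> where \<sigma>: "0 < \<sigma>" "\<sigma> \<le> xs $ k" "\<And>j. \<bar>xs $ j - z j\<bar> + \<sigma> \<le> (1 - \<delta>) * r j"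
    and segment: "\<And>i s. \<bar>s\<bar> < \<sigma> \<Longrightarrow> (xs + s *\<^sub>R axis i 1, ts) \<in> ?P"
    using axis_segments_in_para_box [OF \<open>(xs, ts) \<in> ?P\<close> _ interior(2)] by blast
  have "\<bar>xs $ j - z j\<bar> + \<sigma> \<le> r j" for j
  proof -
    have "(1 - \<delta>) * r j \<le> 1 * r j" using \<delta>(1) r_pos [of j] by (intro mult_right_mono) auto
    then show ?thesis using \<sigma>(3) [of j] by linarith
  qed
  have "xs $ k \<le> 2 * d" using in_box [OF \<open>(xs, ts) \<in> ?P\<close>, of k] \<open>z k = 0\<close> r(3) by simp
  then have "xs $ k / K \<le> 2 * d / K" using pos by (simp add: divide_right_mono)
  then have "xs $ k / K \<le> \<kappa> / 2 * c powr (p - 2)" using small_x by linarith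
  have "ts < 0" "\<theta> < ts" "z k \<le> xs $ k"
    using in_P [OF \<open>(xs, ts) \<in> ?P\<close>] t interior(3) \<open>z k = 0\<close> \<open>0 < xs $ k\<close> by auto
  have "u xs ts - W xs ts \<le> u (xs + s *\<^sub>R axis i 1) ts - W (xs + s *\<^sub>R axis i 1) ts"
    if "\<bar>s\<bar> < \<sigma>" for i s using min [OF segment [OF that]] .
  note min_space = this [unfolded W_def]
  have "u xs ts - W xs ts \<le> u xs s - W xs s" if "a \<le> s" "s \<le> ts" for s
    using min \<open>(xs, ts) \<in> ?P\<close> that unfolding para_box_def by auto
  note min_time = this [unfolded W_def]
  show False
    by (rule barrier_cannot_touch_from_below [where u = u and k = k and r = r and z = z and c = c
        and K = K and \<theta> = \<theta> and \<alpha> = \<alpha> and \<kappa> = \<kappa> and d = d and \<sigma> = \<sigma> and x = xs and t = ts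
        and a = a and p = p]; fact)
qed

lemma barrier_comparison:
  fixes u :: "real^'n \<Rightarrow> real \<Rightarrow> real" and k :: 'n and r z :: "'n \<Rightarrow> real"
    and c K \<theta> \<alpha> \<kappa> :: real
  defines "W \<equiv> \<lambda>x t. - (c + K / (t - \<theta>)) * x $ k + box_barrier \<alpha> r z x"
  assumes anc: "ancient_solution p k u"
    and p: "2 \<le> p" "(\<alpha> - 1) * p = \<alpha> - 2" "0 \<le> \<alpha>" "\<alpha> \<le> 2"
    and \<kappa>: "0 < \<kappa>" "\<kappa> * (CARD('n) + 1) \<le> 1"
    and r: "0 < d" "\<And>j. d \<le> r j" "r k \<le> 2 * d" and "z k = 0"
    and pos: "0 < c" "0 < K"
    and small_x: "2 * d / K \<le> \<kappa> / 2 * c powr (p - 2)"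
    and large_c: "CARD('n) * (d powr (\<alpha> - 2) * (8 * (8 / \<kappa>)^3)) < \<kappa> / 2 * c powr p"
    and t: "\<theta> < T" "T < 0" and "0 < \<epsilon>"
    and y: "0 \<le> y $ k" "\<And>i. \<bar>y $ i - z i\<bar> \<le> r i / 2"
  shows "W y T - \<epsilon> \<le> u y T"
proof -
  have r_pos: "0 < r j" for j using r(1) r(2) [of j] by linarith
  obtain M where "0 \<le> M" and u_ge: "\<And>x t. (x, t) \<in> para_box k z r \<theta> T \<Longrightarrow> - M \<le> u x t"
    using ancient_solution_bounded_below [OF anc, of T z r \<theta>] t by force
  obtain \<eta> where "0 < \<eta>"
    and u_near: "\<And>x t. (x, t) \<in> para_box k z r \<theta> T \<Longrightarrow> x $ k < \<eta> \<Longrightarrow> - \<epsilon> < u x t"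
    using ancient_solution_near_boundary [where z = z and \<rho> = r and a = \<theta>,
        OF anc \<open>0 < \<epsilon>\<close> t(2) \<open>z k = 0\<close> less_imp_le [OF r_pos]] by force
  \<comment> \<open>chosen so that \<open>W \<le> - (M + 1)\<close> on the lateral faces of the shrunken box and at its initial time\<close>
  define \<delta> where "\<delta> = d powr \<alpha> / (2 * (d powr \<alpha> + M + 1))"
  define \<tau> where "\<tau> = min ((T - \<theta>) / 2) (K * \<eta> / (M + 1))"
  have \<delta>: "0 < \<delta>" "\<delta> \<le> 1/2" "d powr \<alpha> * (1 - 1 / (2 * \<delta>)) = - (M + 1)"
  proof -
    define A where "A = d powr \<alpha>"
    have "0 < A" unfolding A_def using r(1) by simp
    then show "0 < \<delta>" "\<delta> \<le> 1/2" "d powr \<alpha> * (1 - 1 / (2 * \<delta>)) = - (M + 1)"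
      unfolding \<delta>_def A_def [symmetric] using \<open>0 \<le> M\<close> by (auto simp: field_simps)
  qed
  have "0 < \<tau>" unfolding \<tau>_def using t pos \<open>0 < \<eta>\<close> \<open>0 \<le> M\<close> by simp
  have "\<tau> \<le> (T - \<theta>) / 2" "\<tau> \<le> K * \<eta> / (M + 1)" unfolding \<tau>_def by (rule min.cobounded1, rule min.cobounded2)
  then have \<tau>: "\<theta> + \<tau> \<le> T" "M + 1 \<le> K / (\<theta> + \<tau> - \<theta>) * \<eta>"
    using t(1) \<open>0 < \<tau>\<close> \<open>0 \<le> M\<close> by (simp_all add: field_simps)
  have "para_box k z (\<lambda>i. (1 - \<delta>) * r i) (\<theta> + \<tau>) T \<subseteq> para_box k z r \<theta> T"
    using \<delta> r_pos \<open>0 < \<tau>\<close> by (intro para_box_mono) (auto simp: mult_le_cancel_right1)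
  then have u_ge': "\<And>x t. (x, t) \<in> para_box k z (\<lambda>i. (1 - \<delta>) * r i) (\<theta> + \<tau>) T \<Longrightarrow> - M \<le> u x t"
    and u_near': "\<And>x t. (x, t) \<in> para_box k z (\<lambda>i. (1 - \<delta>) * r i) (\<theta> + \<tau>) T \<Longrightarrow> x $ k < \<eta>
      \<Longrightarrow> - \<epsilon> < u x t"
    using u_ge u_near by auto
  have "\<bar>y $ i - z i\<bar> \<le> (1 - \<delta>) * r i" for i
  proof -
    have "1 / 2 * r i \<le> (1 - \<delta>) * r i" using \<delta>(2) r_pos [of i] by (intro mult_right_mono) auto
    then show ?thesis using y(2) [of i] by simp
  qed
  then have "(y, T) \<in> para_box k z (\<lambda>i. (1 - \<delta>) * r i) (\<theta> + \<tau>) T"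
    unfolding para_box_def using y(1) \<tau>(1) by auto
  have "d powr \<alpha> * (1 - 1 / (2 * \<delta>)) \<le> - (M + 1)" using \<delta>(3) by simp
  have "\<theta> < \<theta> + \<tau>" using \<open>0 < \<tau>\<close> by simp
  show ?thesis unfolding W_def
    by (rule barrier_comparison_on_para_box [where u = u and k = k and r = r and z = z and c = c
        and K = K and \<theta> = \<theta> and \<alpha> = \<alpha> and \<kappa> = \<kappa> and \<delta> = \<delta> and a = "\<theta> + \<tau>" and T = T
        and p = p and d = d and \<epsilon> = \<epsilon> and \<eta> = \<eta> and M = M and y = y]; fact)
qed

lemma ancient_solution_ge_centred_barrier:
  fixes u :: "real^'n \<Rightarrow> real \<Rightarrow> real" and k :: 'n and \<kappa> :: real
  assumes anc: "ancient_solution p k u" and p: "2 < p" and "(x, t) \<in> QQ k"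
    and \<kappa>: "0 < \<kappa>" "\<kappa> * (CARD('n) + 1) \<le> 1" and pos: "0 < c" "0 < K"
    and small_x: "2 * x $ k / K \<le> \<kappa> / 2 * c powr (p - 2)"
    and large_c: "CARD('n) * (x $ k powr (1 - 1 / (p - 1) - 2) * (8 * (8 / \<kappa>)^3)) < \<kappa> / 2 * c powr p"
  shows "- c * x $ k - (2 * x $ k) powr (1 - 1 / (p - 1)) / 3 \<le> u x t"
proof (rule field_le_epsilon)
  fix e :: real assume "0 < e"
  define \<alpha> where "\<alpha> = 1 - 1 / (p - 1)"
  define d where "d = x $ k"
  define L where "L = 2 * K * d / e"
  have "0 < d" "t < 0" using \<open>(x, t) \<in> QQ k\<close> unfolding QQ_def half_space_def d_def by auto
  have \<alpha>: "(\<alpha> - 1) * p = \<alpha> - 2" "0 \<le> \<alpha>" "\<alpha> \<le> 2" unfolding \<alpha>_def using p by (auto simp: field_simps)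
  have "0 < L" unfolding L_def using pos \<open>0 < d\<close> \<open>0 < e\<close> by simp
  have "- (c + K / (t - (t - L))) * x $ k
      + box_barrier \<alpha> (\<lambda>i. if i = k then 2 * d else d) (\<lambda>i. if i = k then 0 else x $ i) x - e / 2 \<le> u x t"
    by (rule barrier_comparison [where k = k and r = "\<lambda>i. if i = k then 2 * d else d"
        and z = "\<lambda>i. if i = k then 0 else x $ i" and c = c and K = K and \<theta> = "t - L" and \<alpha> = \<alpha>
        and \<kappa> = \<kappa> and d = d and y = x and T = t and \<epsilon> = "e / 2" and p = p])
      (use anc p \<alpha> \<kappa> pos small_x large_c \<open>0 < L\<close> \<open>t < 0\<close> \<open>0 < e\<close> \<open>0 < d\<close> in
        \<open>auto simp: d_def \<alpha>_def\<close>)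
  moreover have "K / L * d = e / 2" unfolding L_def using pos \<open>0 < d\<close> \<open>0 < e\<close> by (simp add: field_simps)
  ultimately show "- c * x $ k - (2 * x $ k) powr (1 - 1 / (p - 1)) / 3 \<le> u x t + e"
    using box_barrier_at_centre [OF \<open>0 < d\<close> [unfolded d_def], of \<alpha>] unfolding d_def \<alpha>_def
    by (simp add: algebra_simps)
qed

section \<open>The lower bound\<close>

definition lower_bound_constant :: "real \<Rightarrow> nat \<Rightarrow> real" where
  "lower_bound_constant p n =
    (2 * n * (n + 1) * (8 * (8 * (n + 1))^3) + 1) powr (1 / p) + 2 powr (1 - 1 / (p - 1)) / 3"

lemma lower_bound_constant_pos: "0 < lower_bound_constant p n"
proof -
  have "0 \<le> 2 * real n * (real n + 1) * (8 * (8 * (real n + 1))^3)"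
    by (intro mult_nonneg_nonneg zero_le_power) auto
  then have "0 < (2 * real n * (real n + 1) * (8 * (8 * (real n + 1))^3) + 1) powr (1 / p)"
    by (subst powr_gt_zero) linarith
  then show ?thesis unfolding lower_bound_constant_def by (intro add_pos_nonneg) auto
qed

lemma ancient_solution_lower_bound:
  fixes u :: "real^'n \<Rightarrow> real \<Rightarrow> real" and k :: 'n
  assumes anc: "ancient_solution p k u" and p: "2 < p" and "(x, t) \<in> QQ k"
  shows "- lower_bound_constant p CARD('n) * x $ k powr (1 - 1 / (p - 1)) \<le> u x t"
proof -
  define N where "N = real CARD('n)"
  define \<kappa> where "\<kappa> = 1 / (N + 1)"
  define S where "S = 8 * (8 / \<kappa>)^3"
  define M where "M = 2 * N * (N + 1) * S + 1"
  define \<alpha> where "\<alpha> = 1 - 1 / (p - 1)"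
  define d where "d = x $ k"
  define c where "c = (M * d powr (\<alpha> - 2)) powr (1 / p)"
  define K where "K = 4 * d / (\<kappa> * c powr (p - 2))"
  have "0 < d" using \<open>(x, t) \<in> QQ k\<close> unfolding QQ_def half_space_def d_def by simp
  have "0 \<le> N" "0 < \<kappa>" "\<kappa> * (N + 1) = 1" unfolding \<kappa>_def N_def by auto
  then have "0 \<le> S" "1 \<le> M" unfolding S_def M_def by auto
  have "0 < c" unfolding c_def using \<open>1 \<le> M\<close> \<open>0 < d\<close> by simp
  have "- c * d - (2 * d) powr \<alpha> / 3 \<le> u x t"
    unfolding d_def \<alpha>_def
  proof (rule ancient_solution_ge_centred_barrier [OF anc p \<open>(x, t) \<in> QQ k\<close>, of \<kappa>])
    show "0 < \<kappa>" "0 < c" by fact+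
    show "\<kappa> * (CARD('n) + 1) \<le> 1" using \<open>\<kappa> * (N + 1) = 1\<close> unfolding N_def by (simp add: add.commute)
    show "0 < K" unfolding K_def using \<open>0 < d\<close> \<open>0 < \<kappa>\<close> \<open>0 < c\<close> by simp
    show "2 * x $ k / K \<le> \<kappa> / 2 * c powr (p - 2)"
      unfolding K_def d_def [symmetric] using \<open>0 < d\<close> \<open>0 < \<kappa>\<close> \<open>0 < c\<close> by (simp add: field_simps)
    have "\<kappa> / 2 * M = N * S * (\<kappa> * (N + 1)) + \<kappa> / 2" unfolding M_def by (simp add: algebra_simps)
    then have "\<kappa> / 2 * c powr p = (N * S + \<kappa> / 2) * d powr (\<alpha> - 2)"
      unfolding c_def using p \<open>1 \<le> M\<close> \<open>0 < d\<close> \<open>\<kappa> * (N + 1) = 1\<close> by (simp add: powr_powr)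
    then show "CARD('n) * (x $ k powr (1 - 1 / (p - 1) - 2) * (8 * (8 / \<kappa>)^3)) < \<kappa> / 2 * c powr p"
      unfolding N_def [symmetric] S_def [symmetric] d_def [symmetric] \<alpha>_def [symmetric]
      using \<open>0 < d\<close> \<open>0 < \<kappa>\<close> by (simp add: algebra_simps)
  qed
  moreover have "c * d = M powr (1 / p) * d powr \<alpha>"
  proof -
    have "(\<alpha> - 2) / p + 1 = \<alpha>" unfolding \<alpha>_def using p by (simp add: field_simps)
    moreover have "d powr ((\<alpha> - 2) / p + 1) = d powr ((\<alpha> - 2) / p) * d"
      using \<open>0 < d\<close> by (simp add: powr_add)
    ultimately have "d powr ((\<alpha> - 2) / p) * d = d powr \<alpha>" by simp
    then show ?thesis unfolding c_def using \<open>1 \<le> M\<close> \<open>0 < d\<close>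
      by (simp add: powr_mult powr_powr mult.assoc)
  qed
  moreover have "(2 * d) powr \<alpha> = 2 powr \<alpha> * d powr \<alpha>" using \<open>0 < d\<close> by (simp add: powr_mult)
  moreover have "lower_bound_constant p CARD('n) = M powr (1 / p) + 2 powr \<alpha> / 3"
  proof -
    have "S = 8 * (8 * (N + 1))^3" unfolding S_def \<kappa>_def by simp
    then show ?thesis unfolding lower_bound_constant_def M_def N_def \<alpha>_def by simp
  qed
  ultimately show ?thesis unfolding d_def [symmetric] \<alpha>_def [symmetric] by (simp add: algebra_simps)
qed

theorem lemma5p3:
  fixes p :: real and k :: "'n::finite"
  assumes "p > 2"
  shows "\<exists>C>0. \<forall>u :: real^'n \<Rightarrow> real \<Rightarrow> real. ancient_solution p k u \<longrightarrow>
           (\<forall>x t. (x, t) \<in> QQ k \<longrightarrow> u x t \<ge> - C * (x $ k) powr (1 - 1 / (p - 1)))"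
proof (intro exI conjI allI impI)
  show "0 < lower_bound_constant p CARD('n)" by (rule lower_bound_constant_pos)
  show "- lower_bound_constant p CARD('n) * x $ k powr (1 - 1 / (p - 1)) \<le> u x t"
    if "ancient_solution p k u" "(x, t) \<in> QQ k" for u :: "real^'n \<Rightarrow> real \<Rightarrow> real" and x t
    using ancient_solution_lower_bound [OF that(1) assms that(2)] .
qed

end
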